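(* Let $\Gamma=A\ast B$ with $A,B$ non-trivial and let $f=f_A\ast f_B$ be a split quasimorphism. The following are equivalent: (i) $f$ is trivial; (ii) $f$ is a homomorphism; (iii) $f$ is homogeneous; (iv) $f_A$ and $f_B$ are homomorphisms.
   Context: A quasimorphism is a map $f:\Gamma\to\mathbb{R}$ with $\sup_{g,h}|f(gh)-f(g)-f(h)|<\infty$; it is alternating if $f(g^{-1})=-f(g)$; it is trivial if it is the sum of a homomorphism $\Gamma\to\mathbb{R}$ and a bounded function; it is homogeneous if $f(g^n)=nf(g)$ for all $g\in\Gamma$, $n\in\mathbb{Z}$. Each $1\neq g\in A\ast B$ has a unique normal form $g=a_1b_1\cdots a_nb_n$ ($a_i\in A$, $b_i\in B$, all non-trivial except possibly $a_1$ or $b_n$). For alternating quasimorphisms $f_A,f_B$ on $A,B$ the split quasimorphism is $f(1)=0$, $f(a_1b_1\cdots a_nb_n)=f_A(a_1)+f_B(b_1)+\dots+f_A(a_n)+f_B(b_n)$. *)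

theory Defs
  imports "HOL-Algebra.Algebra"
begin

text \<open>Free products are rendered as internal free products: A and B are subgroups of a
group G such that every element of G has a unique normal form, i.e. is the value of exactly
one reduced alternating word.\<close>

definition reduced_word :: "('g, 'b) monoid_scheme \<Rightarrow> 'g set \<Rightarrow> 'g set \<Rightarrow> ('g + 'g) list \<Rightarrow> bool" where
  "reduced_word G A B w \<longleftrightarrow>
     (\<forall>x \<in> set w. case x of Inl a \<Rightarrow> a \<in> A \<and> a \<noteq> \<one>\<^bsub>G\<^esub>
                          | Inr b \<Rightarrow> b \<in> B \<and> b \<noteq> \<one>\<^bsub>G\<^esub>) \<and>
     (\<forall>i. Suc i < length w \<longrightarrow> isl (w ! i) \<noteq> isl (w ! Suc i))"

definition letter_val :: "'g + 'g \<Rightarrow> 'g" where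
  "letter_val x = (case x of Inl a \<Rightarrow> a | Inr b \<Rightarrow> b)"

definition word_eval :: "('g, 'b) monoid_scheme \<Rightarrow> ('g + 'g) list \<Rightarrow> 'g" where
  "word_eval G w = foldr (\<lambda>x acc. letter_val x \<otimes>\<^bsub>G\<^esub> acc) w \<one>\<^bsub>G\<^esub>"

definition is_free_product :: "('g, 'b) monoid_scheme \<Rightarrow> 'g set \<Rightarrow> 'g set \<Rightarrow> bool" where
  "is_free_product G A B \<longleftrightarrow> group G \<and> subgroup A G \<and> subgroup B G \<and>
     (\<forall>g \<in> carrier G. \<exists>!w. reduced_word G A B w \<and> word_eval G w = g)"

definition quasimorphism :: "('g, 'b) monoid_scheme \<Rightarrow> ('g \<Rightarrow> real) \<Rightarrow> bool" where
  "quasimorphism G f \<longleftrightarrow> (\<exists>D. \<forall>g \<in> carrier G. \<forall>h \<in> carrier G.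
      \<bar>f (g \<otimes>\<^bsub>G\<^esub> h) - f g - f h\<bar> \<le> D)"

definition alternating :: "('g, 'b) monoid_scheme \<Rightarrow> ('g \<Rightarrow> real) \<Rightarrow> bool" where
  "alternating G f \<longleftrightarrow> (\<forall>g \<in> carrier G. f (inv\<^bsub>G\<^esub> g) = - f g)"

definition real_hom :: "('g, 'b) monoid_scheme \<Rightarrow> ('g \<Rightarrow> real) \<Rightarrow> bool" where
  "real_hom G f \<longleftrightarrow> (\<forall>g \<in> carrier G. \<forall>h \<in> carrier G. f (g \<otimes>\<^bsub>G\<^esub> h) = f g + f h)"

definition trivial_qm :: "('g, 'b) monoid_scheme \<Rightarrow> ('g \<Rightarrow> real) \<Rightarrow> bool" where
  "trivial_qm G f \<longleftrightarrow> (\<exists>\<phi> \<beta>. real_hom G \<phi> \<and> (\<exists>C. \<forall>g \<in> carrier G. \<bar>\<beta> g\<bar> \<le> C) \<and>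
      (\<forall>g \<in> carrier G. f g = \<phi> g + \<beta> g))"

definition homogeneous :: "('g, 'b) monoid_scheme \<Rightarrow> ('g \<Rightarrow> real) \<Rightarrow> bool" where
  "homogeneous G f \<longleftrightarrow> (\<forall>g \<in> carrier G. \<forall>n::int. f (g [^]\<^bsub>G\<^esub> n) = of_int n * f g)"

definition split_qm :: "('g, 'b) monoid_scheme \<Rightarrow> 'g set \<Rightarrow> 'g set \<Rightarrow> ('g \<Rightarrow> real) \<Rightarrow> ('g \<Rightarrow> real) \<Rightarrow> 'g \<Rightarrow> real" where
  "split_qm G A B fA fB g =
     (let w = (THE w. reduced_word G A B w \<and> word_eval G w = g)
      in sum_list (map (\<lambda>x. case x of Inl a \<Rightarrow> fA a | Inr b \<Rightarrow> fB b) w))"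

end

theory Submission
  imports Defs
begin

text \<open>
  (iv) \<Longrightarrow> (ii): if f_A and f_B are homomorphisms, multiplying on the left by a letter changes
  f by the value of that letter, whether or not the letter merges with the first letter of the
  normal form. (ii) \<Longrightarrow> (i) and (ii) \<Longrightarrow> (iii) hold in any group.
  (iii) \<Longrightarrow> (iv): for x, y in A and b \<noteq> 1 in B the square of y b x has normal form
  y b (x y) b x, so homogeneity forces f_A(x y) = f_A x + f_A y.
  (i) \<Longrightarrow> (iv): f grows linearly along (a b)^n, so a homomorphism \<phi> at bounded distance from f
  satisfies f_A a + f_B b = \<phi> a + \<phi> b; replacing b by b^-1 and using that f_B is alternating
  gives f_A = \<phi> on A.
  Every step for the factor B is obtained from the one for A by exchanging the two factors.
\<close>

definition split_sum :: "('g \<Rightarrow> real) \<Rightarrow> ('g \<Rightarrow> real) \<Rightarrow> ('g + 'g) list \<Rightarrow> real" where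
  "split_sum fA fB w = sum_list (map (case_sum fA fB) w)"

lemma split_sum_simps [simp]:
  "split_sum fA fB [] = 0"
  "split_sum fA fB (x # w) = case_sum fA fB x + split_sum fA fB w"
  by (simp_all add: split_sum_def)

lemma word_eval_simps [simp]:
  "word_eval G [] = \<one>\<^bsub>G\<^esub>"
  "word_eval G (x # w) = letter_val x \<otimes>\<^bsub>G\<^esub> word_eval G w"
  by (simp_all add: word_eval_def)

lemma letter_val_simps [simp]: "letter_val (Inl a) = a" "letter_val (Inr b) = b"
  by (simp_all add: letter_val_def)

lemma reduced_word_Nil [simp]: "reduced_word G A B []"
  by (simp add: reduced_word_def)

lemma reduced_word_Cons:
  "reduced_word G A B (x # w) \<longleftrightarrow>
     (case x of Inl a \<Rightarrow> a \<in> A \<and> a \<noteq> \<one>\<^bsub>G\<^esub> | Inr b \<Rightarrow> b \<in> B \<and> b \<noteq> \<one>\<^bsub>G\<^esub>) \<and>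
     reduced_word G A B w \<and> (w \<noteq> [] \<longrightarrow> isl x \<noteq> isl (hd w))"
proof -
  have "(\<forall>i. Suc i < length (x # w) \<longrightarrow> isl ((x # w) ! i) \<noteq> isl ((x # w) ! Suc i)) \<longleftrightarrow>
        (w \<noteq> [] \<longrightarrow> isl x \<noteq> isl (hd w)) \<and> (\<forall>i. Suc i < length w \<longrightarrow> isl (w ! i) \<noteq> isl (w ! Suc i))"
    by (cases w) (auto simp: All_less_Suc2 nth_Cons split: nat.split)
  then show ?thesis unfolding reduced_word_def by auto
qed

abbreviation swap_letters :: "('g + 'g) list \<Rightarrow> ('g + 'g) list" where
  "swap_letters \<equiv> map (case_sum Inr Inl)"

lemma swap_letters_swap_letters [simp]: "swap_letters (swap_letters w) = w"
  by (induction w) (auto split: sum.split)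

lemma split_sum_swap_letters [simp]: "split_sum fB fA (swap_letters w) = split_sum fA fB w"
  by (induction w) (auto split: sum.split)

lemma word_eval_swap_letters [simp]: "word_eval G (swap_letters w) = word_eval G w"
  by (induction w) (auto split: sum.split)

lemma reduced_word_swap_letters [simp]:
  "reduced_word G B A (swap_letters w) \<longleftrightarrow> reduced_word G A B w"
  by (induction w) (auto simp: reduced_word_Cons hd_map split: sum.split)

lemma real_hom_subgroup_iff:
  "real_hom (G\<lparr>carrier := H\<rparr>) f \<longleftrightarrow> (\<forall>x\<in>H. \<forall>y\<in>H. f (x \<otimes>\<^bsub>G\<^esub> y) = f x + f y)"
  by (simp add: real_hom_def)

lemma (in group) alternating_subgroupD:
  assumes "subgroup H G" "alternating (G\<lparr>carrier := H\<rparr>) f" "x \<in> H"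
  shows "f (inv x) = - f x"
  using assms unfolding alternating_def by simp

lemma (in group) alternating_subgroup_one:
  assumes "subgroup H G" "alternating (G\<lparr>carrier := H\<rparr>) f"
  shows "f \<one> = 0"
  using alternating_subgroupD[OF assms subgroup.one_closed[OF assms(1)]] by simp

lemma (in group) real_hom_one: "real_hom G f \<Longrightarrow> f \<one> = 0"
  unfolding real_hom_def by (metis add_cancel_right_right one_closed r_one)

lemma (in group) real_hom_inv: "real_hom G f \<Longrightarrow> x \<in> carrier G \<Longrightarrow> f (inv x) = - f x"
  using real_hom_one unfolding real_hom_def
  by (metis add_eq_0_iff inv_closed r_inv)

lemma (in group) real_hom_nat_pow:
  assumes "real_hom G f" "x \<in> carrier G"
  shows "f (x [^] (n::nat)) = real n * f x"
proof (induction n)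
  case 0 then show ?case using real_hom_one[OF assms(1)] by simp
next
  case (Suc n) then show ?case using assms unfolding real_hom_def by (simp add: algebra_simps)
qed

lemma (in group) real_hom_imp_homogeneous:
  assumes "real_hom G f"
  shows "homogeneous G f"
  unfolding homogeneous_def
proof (intro ballI allI)
  fix x and n :: int
  assume x: "x \<in> carrier G"
  show "f (x [^] n) = of_int n * f x"
  proof (cases "n < 0")
    case True
    then have "f (x [^] n) = - f (x [^] nat (- n))"
      using x by (simp add: int_pow_def2 real_hom_inv[OF assms] del: pow_nat)
    moreover have "f (x [^] nat (- n)) = real (nat (- n)) * f x"
      using real_hom_nat_pow[OF assms x] .
    ultimately show ?thesis using True by simp
  next
    case False
    then show ?thesis using x by (simp add: int_pow_def2 real_hom_nat_pow[OF assms] del: pow_nat)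
  qed
qed

lemma (in group) homogeneous_square:
  assumes "homogeneous G f" "x \<in> carrier G"
  shows "f (x \<otimes> x) = 2 * f x"
proof -
  have "x [^] (2::int) = x \<otimes> x"
    using assms(2) by (simp add: int_pow_def2 numeral_2_eq_2 del: pow_nat)
  then show ?thesis using assms unfolding homogeneous_def by (metis of_int_numeral)
qed

lemma (in group) real_hom_subgroup_if_eq:
  assumes "subgroup H G" "real_hom G \<phi>" "\<And>x. x \<in> H \<Longrightarrow> f x = \<phi> x"
  shows "real_hom (G\<lparr>carrier := H\<rparr>) f"
  using assms subgroup.m_closed[OF assms(1)] subgroup.mem_carrier[OF assms(1)]
  unfolding real_hom_subgroup_iff real_hom_def by simp

lemma real_hom_imp_trivial_qm: "real_hom G f \<Longrightarrow> trivial_qm G f"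
  unfolding trivial_qm_def by (rule exI[of _ f], rule exI[of _ "\<lambda>_. 0"]) auto

lemma (in group) homogeneous_cong:
  "(\<And>x. x \<in> carrier G \<Longrightarrow> f x = f' x) \<Longrightarrow> homogeneous G f \<longleftrightarrow> homogeneous G f'"
  unfolding homogeneous_def by simp

lemma bounded_multiples_eq_zero:
  fixes d C :: real
  assumes "\<And>n::nat. \<bar>real n * d\<bar> \<le> C"
  shows "d = 0"
proof (rule ccontr)
  assume "d \<noteq> 0"
  moreover obtain n :: nat where "C / \<bar>d\<bar> < real n"
    using reals_Archimedean2 by blast
  ultimately have "C < \<bar>real n * d\<bar>"
    by (simp add: field_simps abs_mult)
  then show False using assms[of n] by simp
qed

locale free_product = group G for G (structure) +
  fixes A B :: "'a set"
  assumes subgroup_A: "subgroup A G" and subgroup_B: "subgroup B G"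
    and unique_normal_form: "g \<in> carrier G \<Longrightarrow> \<exists>!w. reduced_word G A B w \<and> word_eval G w = g"

lemma is_free_product_iff_free_product: "is_free_product G A B \<longleftrightarrow> free_product G A B"
  unfolding is_free_product_def free_product_def free_product_axioms_def by blast

context free_product
begin

lemma word_eval_closed: "reduced_word G A B w \<Longrightarrow> word_eval G w \<in> carrier G"
proof (induction w)
  case (Cons x w)
  then have "letter_val x \<in> carrier G"
    using subgroup.subset[OF subgroup_A] subgroup.subset[OF subgroup_B]
    by (auto simp: reduced_word_Cons split: sum.splits)
  with Cons show ?case by (simp add: reduced_word_Cons)
qed simp

lemma normal_formE:
  assumes "g \<in> carrier G"
  obtains w where "reduced_word G A B w" "word_eval G w = g"
  using unique_normal_form[OF assms] by blast

lemma split_qm_word_eval: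
  assumes "reduced_word G A B w"
  shows "split_qm G A B fA fB (word_eval G w) = split_sum fA fB w"
proof -
  have "(THE w'. reduced_word G A B w' \<and> word_eval G w' = word_eval G w) = w"
    using unique_normal_form[OF word_eval_closed[OF assms]] assms by blast
  then show ?thesis by (simp add: split_qm_def split_sum_def)
qed

lemma swap: "free_product G B A"
proof (intro free_product.intro free_product_axioms.intro is_group subgroup_A subgroup_B)
  fix g assume "g \<in> carrier G"
  then obtain w where w: "reduced_word G A B w" "word_eval G w = g"
    and uniq: "\<And>w'. reduced_word G A B w' \<Longrightarrow> word_eval G w' = g \<Longrightarrow> w' = w"
    using unique_normal_form by blast
  show "\<exists>!w. reduced_word G B A w \<and> word_eval G w = g"
  proof
    show "reduced_word G B A (swap_letters w) \<and> word_eval G (swap_letters w) = g"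
      using w by simp
    fix w' assume "reduced_word G B A w' \<and> word_eval G w' = g"
    then have "swap_letters w' = w"
      using uniq[of "swap_letters w'"] reduced_word_swap_letters[of G A B "swap_letters w'"] by simp
    then show "w' = swap_letters w" by (metis swap_letters_swap_letters)
  qed
qed

lemma split_qm_swap:
  assumes "g \<in> carrier G"
  shows "split_qm G B A fB fA g = split_qm G A B fA fB g"
proof -
  interpret BA: free_product G B A by (rule swap)
  obtain w where w: "reduced_word G A B w" "word_eval G w = g"
    using normal_formE[OF assms] .
  have "split_qm G B A fB fA (word_eval G (swap_letters w)) = split_sum fB fA (swap_letters w)"
    using w(1) by (intro BA.split_qm_word_eval) simp
  then show ?thesis using w split_qm_word_eval[OF w(1)] by simp
qed

lemma split_qm_Inl_Cons:
  assumes "x \<in> A" "fA \<one> = 0" "reduced_word G A B w" "w \<noteq> [] \<longrightarrow> \<not> isl (hd w)"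
  shows "split_qm G A B fA fB (x \<otimes> word_eval G w) = fA x + split_sum fA fB w"
proof (cases "x = \<one>")
  case True
  then show ?thesis using assms word_eval_closed split_qm_word_eval by simp
next
  case False
  with assms have "reduced_word G A B (Inl x # w)" by (simp add: reduced_word_Cons)
  from split_qm_word_eval[OF this] show ?thesis by simp
qed

lemma split_qm_mult_A:
  assumes hom: "real_hom (G\<lparr>carrier := A\<rparr>) fA" and x: "x \<in> A" and k: "k \<in> carrier G"
  shows "split_qm G A B fA fB (x \<otimes> k) = fA x + split_qm G A B fA fB k"
proof -
  have fA_mult: "fA (y \<otimes> z) = fA y + fA z" if "y \<in> A" "z \<in> A" for y z
    using hom that by (simp add: real_hom_subgroup_iff)
  have fA_one: "fA \<one> = 0"
    using fA_mult[of \<one> \<one>] subgroup.one_closed[OF subgroup_A] by simp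
  obtain w where w: "reduced_word G A B w" "word_eval G w = k"
    using normal_formE[OF k] .
  show ?thesis
  proof (cases "w \<noteq> [] \<and> isl (hd w)")
    case True
    then obtain a t where w_eq: "w = Inl a # t"
      by (cases w) (auto simp: isl_def)
    with w(1) have a: "a \<in> A" and t: "reduced_word G A B t" "t \<noteq> [] \<longrightarrow> \<not> isl (hd t)"
      by (auto simp: reduced_word_Cons)
    have "x \<otimes> k = (x \<otimes> a) \<otimes> word_eval G t"
      using w(2) w_eq x a word_eval_closed[OF t(1)] subgroup.mem_carrier[OF subgroup_A]
      by (simp add: m_assoc)
    then have "split_qm G A B fA fB (x \<otimes> k) = fA (x \<otimes> a) + split_sum fA fB t"
      using split_qm_Inl_Cons[where fA = fA and fB = fB, OF subgroup.m_closed[OF subgroup_A x a] fA_one t] by simp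
    also have "\<dots> = fA x + split_qm G A B fA fB k"
      using fA_mult[OF x a] split_qm_word_eval[OF w(1)] w(2) w_eq by simp
    finally show ?thesis .
  next
    case False
    then show ?thesis
      using split_qm_Inl_Cons[where fA = fA and fB = fB, OF x fA_one w(1)] split_qm_word_eval[OF w(1)] w(2) by auto
  qed
qed

lemma split_qm_mult_B:
  assumes "real_hom (G\<lparr>carrier := B\<rparr>) fB" "x \<in> B" "k \<in> carrier G"
  shows "split_qm G A B fA fB (x \<otimes> k) = fB x + split_qm G A B fA fB k"
proof -
  interpret BA: free_product G B A by (rule swap)
  have "x \<otimes> k \<in> carrier G"
    using assms subgroup.subset[OF subgroup_B] by auto
  then show ?thesis
    using BA.split_qm_mult_A[OF assms, of fA] split_qm_swap assms(3) by simp
qed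

lemma real_hom_split_qm:
  assumes hA: "real_hom (G\<lparr>carrier := A\<rparr>) fA" and hB: "real_hom (G\<lparr>carrier := B\<rparr>) fB"
  shows "real_hom G (split_qm G A B fA fB)"
proof -
  have mult_word: "split_qm G A B fA fB (word_eval G w \<otimes> k) = split_sum fA fB w + split_qm G A B fA fB k"
    if "reduced_word G A B w" "k \<in> carrier G" for w k
    using that
  proof (induction w arbitrary: k)
    case (Cons x w)
    then have w: "reduced_word G A B w" by (simp add: reduced_word_Cons)
    have "word_eval G (x # w) \<otimes> k = letter_val x \<otimes> (word_eval G w \<otimes> k)"
      using Cons.prems subgroup.subset[OF subgroup_A] subgroup.subset[OF subgroup_B]
        word_eval_closed[OF w]
      by (auto simp: m_assoc reduced_word_Cons split: sum.splits)
    then show ?case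
      using Cons.prems Cons.IH[OF w] word_eval_closed[OF w]
        split_qm_mult_A[OF hA] split_qm_mult_B[OF hB]
      by (auto simp: reduced_word_Cons split: sum.splits)
  qed simp
  show ?thesis unfolding real_hom_def
  proof (intro ballI)
    fix g h assume g: "g \<in> carrier G" and h: "h \<in> carrier G"
    obtain w where "reduced_word G A B w" "word_eval G w = g"
      using normal_formE[OF g] .
    then show "split_qm G A B fA fB (g \<otimes> h) = split_qm G A B fA fB g + split_qm G A B fA fB h"
      using mult_word h split_qm_word_eval by metis
  qed
qed

lemma real_hom_A_if_homogeneous:
  assumes alt: "alternating (G\<lparr>carrier := A\<rparr>) fA" and B_nontrivial: "B \<noteq> {\<one>}"
    and hg: "homogeneous G (split_qm G A B fA fB)"
  shows "real_hom (G\<lparr>carrier := A\<rparr>) fA"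
  unfolding real_hom_subgroup_iff
proof (intro ballI)
  fix x y assume x: "x \<in> A" and y: "y \<in> A"
  have xy_carrier: "x \<in> carrier G" "y \<in> carrier G"
    using x y subgroup.mem_carrier[OF subgroup_A] by auto
  have fA_one: "fA \<one> = 0"
    using alternating_subgroup_one[OF subgroup_A alt] .
  consider "x = \<one> \<or> y = \<one>" | "x \<otimes> y = \<one>" | "x \<noteq> \<one>" "y \<noteq> \<one>" "x \<otimes> y \<noteq> \<one>"
    by blast
  then show "fA (x \<otimes> y) = fA x + fA y"
  proof cases
    case 1
    then show ?thesis using fA_one xy_carrier by auto
  next
    case 2
    then have "inv y = x" using inv_equality xy_carrier by simp
    then show ?thesis using 2 fA_one alternating_subgroupD[OF subgroup_A alt y] by simp
  next
    case 3
    obtain b where b: "b \<in> B" "b \<noteq> \<one>"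
      using B_nontrivial subgroup.one_closed[OF subgroup_B] by blast
    define w where "w = [Inl y, Inr b, Inl x]"
    define w_sq where "w_sq = [Inl y, Inr b, Inl (x \<otimes> y), Inr b, Inl x]"
    have w: "reduced_word G A B w" and w_sq: "reduced_word G A B w_sq"
      unfolding w_def w_sq_def using x y b 3 subgroup.m_closed[OF subgroup_A x y]
      by (simp_all add: reduced_word_Cons)
    have "word_eval G w_sq = word_eval G w \<otimes> word_eval G w"
      unfolding w_def w_sq_def using xy_carrier b(1) subgroup.mem_carrier[OF subgroup_B]
      by (simp add: m_assoc)
    then have "split_sum fA fB w_sq = split_qm G A B fA fB (word_eval G w \<otimes> word_eval G w)"
      using split_qm_word_eval[OF w_sq] by simp
    also have "\<dots> = 2 * split_sum fA fB w"
      using homogeneous_square[OF hg word_eval_closed[OF w]] split_qm_word_eval[OF w] by simp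
    finally show ?thesis unfolding w_def w_sq_def by simp
  qed
qed

lemma real_hom_factors_if_homogeneous:
  assumes "alternating (G\<lparr>carrier := A\<rparr>) fA" "alternating (G\<lparr>carrier := B\<rparr>) fB"
    and "A \<noteq> {\<one>}" "B \<noteq> {\<one>}" and hg: "homogeneous G (split_qm G A B fA fB)"
  shows "real_hom (G\<lparr>carrier := A\<rparr>) fA \<and> real_hom (G\<lparr>carrier := B\<rparr>) fB"
proof -
  interpret BA: free_product G B A by (rule swap)
  have "homogeneous G (split_qm G B A fB fA)"
    using hg homogeneous_cong[of "split_qm G B A fB fA"] split_qm_swap by simp
  then show ?thesis
    using real_hom_A_if_homogeneous[OF assms(1,4) hg] BA.real_hom_A_if_homogeneous[OF assms(2,3)]
    by blast
qed

lemma split_qm_pow_letter_pair: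
  assumes a: "a \<in> A" "a \<noteq> \<one>" and b: "b \<in> B" "b \<noteq> \<one>"
  shows "split_qm G A B fA fB ((a \<otimes> b) [^] n) = real n * (fA a + fB b)"
proof -
  define w where "w = concat (replicate n [Inl a, Inr b])"
  have "reduced_word G A B w"
    unfolding w_def
  proof (induction n)
    case (Suc n)
    then show ?case using a b by (cases n) (simp_all add: reduced_word_Cons)
  qed simp
  moreover have "word_eval G w = (a \<otimes> b) [^] n"
    unfolding w_def
  proof (induction n)
    case (Suc n)
    have ab: "a \<in> carrier G" "b \<in> carrier G"
      using subgroup.mem_carrier[OF subgroup_A a(1)] subgroup.mem_carrier[OF subgroup_B b(1)] .
    then have "word_eval G (concat (replicate (Suc n) [Inl a, Inr b])) = (a \<otimes> b) \<otimes> (a \<otimes> b) [^] n"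
      using Suc by (simp add: m_assoc)
    also have "\<dots> = (a \<otimes> b) [^] Suc n"
      using nat_pow_Suc2[symmetric] ab by blast
    finally show ?case .
  qed simp
  moreover have "split_sum fA fB w = real n * (fA a + fB b)"
    unfolding w_def by (induction n) (simp_all add: algebra_simps)
  ultimately show ?thesis using split_qm_word_eval by metis
qed

lemma letter_pair_eq_if_close_to_real_hom:
  assumes hom: "real_hom G \<phi>" and close: "\<forall>g\<in>carrier G. \<bar>split_qm G A B fA fB g - \<phi> g\<bar> \<le> C"
    and a: "a \<in> A" "a \<noteq> \<one>" and b: "b \<in> B" "b \<noteq> \<one>"
  shows "fA a + fB b = \<phi> a + \<phi> b"
proof -
  have ab: "a \<otimes> b \<in> carrier G"
    using subgroup.mem_carrier[OF subgroup_A a(1)] subgroup.mem_carrier[OF subgroup_B b(1)] by simp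
  have "\<bar>real n * (fA a + fB b - (\<phi> a + \<phi> b))\<bar> \<le> C" for n
  proof -
    have "\<phi> ((a \<otimes> b) [^] n) = real n * (\<phi> a + \<phi> b)"
      using real_hom_nat_pow[OF hom ab] hom ab
        subgroup.mem_carrier[OF subgroup_A a(1)] subgroup.mem_carrier[OF subgroup_B b(1)]
      unfolding real_hom_def by simp
    moreover have "\<bar>split_qm G A B fA fB ((a \<otimes> b) [^] n) - \<phi> ((a \<otimes> b) [^] n)\<bar> \<le> C"
      using close ab by simp
    ultimately show ?thesis
      using split_qm_pow_letter_pair[OF a b, of fA fB n] by (simp add: algebra_simps)
  qed
  then show ?thesis using bounded_multiples_eq_zero by fastforce
qed

text \<open>Comparing the letter pairs (a, b) and (a, b^-1) isolates the value at a.\<close>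

lemma factor_A_eq_if_close_to_real_hom:
  assumes hom: "real_hom G \<phi>" and close: "\<forall>g\<in>carrier G. \<bar>split_qm G A B fA fB g - \<phi> g\<bar> \<le> C"
    and altA: "alternating (G\<lparr>carrier := A\<rparr>) fA" and altB: "alternating (G\<lparr>carrier := B\<rparr>) fB"
    and B_nontrivial: "B \<noteq> {\<one>}" and a: "a \<in> A"
  shows "fA a = \<phi> a"
proof (cases "a = \<one>")
  case True
  then show ?thesis using alternating_subgroup_one[OF subgroup_A altA] real_hom_one[OF hom] by simp
next
  case False
  obtain b where b: "b \<in> B" "b \<noteq> \<one>"
    using B_nontrivial subgroup.one_closed[OF subgroup_B] by blast
  have inv_b: "inv b \<in> B" "inv b \<noteq> \<one>"
    using b subgroup.m_inv_closed[OF subgroup_B] subgroup.mem_carrier[OF subgroup_B] inv_eq_1_iff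
    by auto
  have "fA a + fB b = \<phi> a + \<phi> b" "fA a + fB (inv b) = \<phi> a + \<phi> (inv b)"
    using letter_pair_eq_if_close_to_real_hom[OF hom close a False] b inv_b by auto
  moreover have "fB (inv b) = - fB b" "\<phi> (inv b) = - \<phi> b"
    using alternating_subgroupD[OF subgroup_B altB b(1)]
      real_hom_inv[OF hom subgroup.mem_carrier[OF subgroup_B b(1)]] by auto
  ultimately show ?thesis by linarith
qed

lemma real_hom_factors_if_trivial_qm:
  assumes altA: "alternating (G\<lparr>carrier := A\<rparr>) fA" and altB: "alternating (G\<lparr>carrier := B\<rparr>) fB"
    and "A \<noteq> {\<one>}" "B \<noteq> {\<one>}" and "trivial_qm G (split_qm G A B fA fB)"
  shows "real_hom (G\<lparr>carrier := A\<rparr>) fA \<and> real_hom (G\<lparr>carrier := B\<rparr>) fB"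
proof -
  interpret BA: free_product G B A by (rule swap)
  obtain \<phi> \<beta> C where hom: "real_hom G \<phi>" and bounded: "\<forall>g\<in>carrier G. \<bar>\<beta> g\<bar> \<le> C"
    and decomp: "\<forall>g\<in>carrier G. split_qm G A B fA fB g = \<phi> g + \<beta> g"
    using assms(5) unfolding trivial_qm_def by blast
  have close: "\<forall>g\<in>carrier G. \<bar>split_qm G A B fA fB g - \<phi> g\<bar> \<le> C"
    using bounded decomp by simp
  then have close_BA: "\<forall>g\<in>carrier G. \<bar>split_qm G B A fB fA g - \<phi> g\<bar> \<le> C"
    using split_qm_swap by simp
  show ?thesis
    using real_hom_subgroup_if_eq[OF subgroup_A hom] real_hom_subgroup_if_eq[OF subgroup_B hom]
      factor_A_eq_if_close_to_real_hom[OF hom close altA altB assms(4)]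
      BA.factor_A_eq_if_close_to_real_hom[OF hom close_BA altB altA assms(3)]
    by blast
qed

end

theorem corollary3p4:
  fixes G :: "('g, 'b) monoid_scheme" and A B :: "'g set" and fA fB :: "'g \<Rightarrow> real"
  assumes "is_free_product G A B"
    and "A \<noteq> {\<one>\<^bsub>G\<^esub>}" and "B \<noteq> {\<one>\<^bsub>G\<^esub>}"
    and "quasimorphism (G\<lparr>carrier := A\<rparr>) fA" and "alternating (G\<lparr>carrier := A\<rparr>) fA"
    and "quasimorphism (G\<lparr>carrier := B\<rparr>) fB" and "alternating (G\<lparr>carrier := B\<rparr>) fB"
  shows "(trivial_qm G (split_qm G A B fA fB) \<longleftrightarrow> real_hom G (split_qm G A B fA fB))
       \<and> (real_hom G (split_qm G A B fA fB) \<longleftrightarrow> homogeneous G (split_qm G A B fA fB))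
       \<and> (homogeneous G (split_qm G A B fA fB) \<longleftrightarrow>
            (real_hom (G\<lparr>carrier := A\<rparr>) fA \<and> real_hom (G\<lparr>carrier := B\<rparr>) fB))"
proof -
  interpret free_product G A B
    using assms(1) by (simp add: is_free_product_iff_free_product)
  let ?f = "split_qm G A B fA fB"
  let ?factors_hom = "real_hom (G\<lparr>carrier := A\<rparr>) fA \<and> real_hom (G\<lparr>carrier := B\<rparr>) fB"
  have "trivial_qm G ?f \<Longrightarrow> ?factors_hom"
    using real_hom_factors_if_trivial_qm[OF assms(5,7,2,3)] .
  moreover have "?factors_hom \<Longrightarrow> real_hom G ?f"
    using real_hom_split_qm by blast
  moreover have "real_hom G ?f \<Longrightarrow> trivial_qm G ?f"
    by (rule real_hom_imp_trivial_qm)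
  moreover have "real_hom G ?f \<Longrightarrow> homogeneous G ?f"
    by (rule real_hom_imp_homogeneous)
  moreover have "homogeneous G ?f \<Longrightarrow> ?factors_hom"
    using real_hom_factors_if_homogeneous[OF assms(5,7,2,3)] .
  ultimately show ?thesis by blast
qed

end
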